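(* Consider an instance of the destructive weighted-\$-protection problem. Suppose the defender succeeds by awarding a set $\mathcal{V}_F\subseteq\mathcal{V}$ with $\sum_{v_j\in\mathcal{V}_F}p_j^a\le F$. If $v_{j'}\prec v_j$, $v_{j'}\in\mathcal{V}_F$ and $v_j\notin\mathcal{V}_F$, then the defender also succeeds by awarding $(\mathcal{V}_F\setminus\{v_{j'}\})\cup\{v_j\}$.
   Context: Election model. Candidates $\mathcal{C}=\{c_1,\dots,c_m\}$, voters $\mathcal{V}=\{v_1,\dots,v_n\}$; voter $v_j$ has a preference list $\tau_j$ (a linear order of $\mathcal{C}$), weight $w_j\in\mathbb{Z}_{>0}$, awarding price $p_j^a\in\mathbb{Z}_{>0}$, bribing price $p_j^b\in\mathbb{Z}_{>0}$. A scoring rule $\alpha=(\alpha_1\ge\cdots\ge\alpha_m)$ of nonnegative integers gives the candidate at position $z$ of $v_j$'s list $w_j\alpha_z$ points; total score is the sum over voters. In the destructive weighted-\$-protection problem, $c_m$ has maximum total score without bribery; there is a defense budget $F$ and an attack budget $B$. Given awarded voters $\mathcal{V}_F$, the attacker may choose $\mathcal{V}_B\subseteq\mathcal{V}\setminus\mathcal{V}_F$ with $\sum_{v_j\in\mathcal{V}_B}p_j^b\le B$ and replace each list in $\mathcal{V}_B$ by an arbitrary list; the defender succeeds with $\mathcal{V}_F$ (of total awarding price at most $F$) if no such bribery makes some $c\neq c_m$ obtain a strictly higher total score than $c_m$. Dominance: $v_{j'}\prec v_j$ if either (i) $\tau_j=\tau_{j'}$, $w_j\ge w_{j'}$, $p_j^a\le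 p_{j'}^a$, $p_j^b\le p_{j'}^b$ with at least one of these three inequalities strict; or (ii) $\tau_j=\tau_{j'}$, $w_j=w_{j'}$, $p_j^a=p_{j'}^a$, $p_j^b=p_{j'}^b$ and $j'<j$. *)

theory Defs
  imports Main
begin

text \<open>Voters are indexed by natural numbers j < n; candidates are elements of a
finite set C of an arbitrary type; d is the distinguished candidate c_m.
A preference list is a list of all candidates without repetition (first = best).
The scoring vector alpha is a list of length |C|, nonincreasing; the candidate at
(0-based) position z of a list gets alpha ! z points per unit weight.\<close>

definition is_pref_list :: "'c set \<Rightarrow> 'c list \<Rightarrow> bool" where
  "is_pref_list C l \<longleftrightarrow> distinct l \<and> set l = C"

definition score :: "nat list \<Rightarrow> (nat \<Rightarrow> nat) \<Rightarrow> nat \<Rightarrow> (nat \<Rightarrow> 'c list) \<Rightarrow> 'c \<Rightarrow> nat" where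
  "score \<alpha> w n P c =
     (\<Sum>j<n. w j * (\<Sum>z<length (P j). if P j ! z = c then \<alpha> ! z else 0))"

definition valid_instance ::
  "'c set \<Rightarrow> nat list \<Rightarrow> nat \<Rightarrow> (nat \<Rightarrow> 'c list) \<Rightarrow> (nat \<Rightarrow> nat) \<Rightarrow> (nat \<Rightarrow> nat)
    \<Rightarrow> (nat \<Rightarrow> nat) \<Rightarrow> 'c \<Rightarrow> bool" where
  "valid_instance C \<alpha> n \<tau> w pa pb d \<longleftrightarrow>
     finite C \<and> d \<in> C \<and> length \<alpha> = card C \<and> sorted_wrt (\<ge>) \<alpha> \<and>
     (\<forall>j<n. is_pref_list C (\<tau> j) \<and> w j > 0 \<and> pa j > 0 \<and> pb j > 0) \<and>
     (\<forall>c\<in>C. score \<alpha> w n \<tau> c \<le> score \<alpha> w n \<tau> d)"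

definition valid_bribery ::
  "'c set \<Rightarrow> nat \<Rightarrow> (nat \<Rightarrow> 'c list) \<Rightarrow> (nat \<Rightarrow> nat) \<Rightarrow> nat \<Rightarrow> nat set
    \<Rightarrow> nat set \<Rightarrow> (nat \<Rightarrow> 'c list) \<Rightarrow> bool" where
  "valid_bribery C n \<tau> pb B VF VB P \<longleftrightarrow>
     VB \<subseteq> {..<n} - VF \<and> (\<Sum>j\<in>VB. pb j) \<le> B \<and>
     (\<forall>j\<in>VB. is_pref_list C (P j)) \<and> (\<forall>j. j \<notin> VB \<longrightarrow> P j = \<tau> j)"

definition defender_succeeds ::
  "'c set \<Rightarrow> nat list \<Rightarrow> nat \<Rightarrow> (nat \<Rightarrow> 'c list) \<Rightarrow> (nat \<Rightarrow> nat) \<Rightarrow> (nat \<Rightarrow> nat)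
    \<Rightarrow> (nat \<Rightarrow> nat) \<Rightarrow> 'c \<Rightarrow> nat \<Rightarrow> nat \<Rightarrow> nat set \<Rightarrow> bool" where
  "defender_succeeds C \<alpha> n \<tau> w pa pb d F B VF \<longleftrightarrow>
     VF \<subseteq> {..<n} \<and> (\<Sum>j\<in>VF. pa j) \<le> F \<and>
     (\<forall>VB P. valid_bribery C n \<tau> pb B VF VB P \<longrightarrow>
        \<not> (\<exists>c\<in>C. c \<noteq> d \<and> score \<alpha> w n P c > score \<alpha> w n P d))"

text \<open>dominated tau w pa pb j' j  means  v_j' \<prec> v_j.\<close>
definition dominated ::
  "(nat \<Rightarrow> 'c list) \<Rightarrow> (nat \<Rightarrow> nat) \<Rightarrow> (nat \<Rightarrow> nat) \<Rightarrow> (nat \<Rightarrow> nat) \<Rightarrow> nat \<Rightarrow> nat \<Rightarrow> bool" where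
  "dominated \<tau> w pa pb j' j \<longleftrightarrow>
     (\<tau> j = \<tau> j' \<and> w j \<ge> w j' \<and> pa j \<le> pa j' \<and> pb j \<le> pb j' \<and>
        (w j > w j' \<or> pa j < pa j' \<or> pb j < pb j')) \<or>
     (\<tau> j = \<tau> j' \<and> w j = w j' \<and> pa j = pa j' \<and> pb j = pb j' \<and> j' < j)"

end

theory Submission
  imports Defs
begin

text \<open>Measure an attack by the margin of the attacker's candidate c over d. In an attack on
the new awarded set, the list given to v_j' changes the margin by w_j' times the change of
c's advantage over d in that list. If this change is not positive, leaving v_j' unbribed
does at least as well; if it is positive, bribing v_j with the same list instead does at
least as well, since v_j has the same original list, weight at least w_j' and bribing price
at most that of v_j'. Either way the old awarded set admits a successful attack as well.\<close>

definition points :: "nat list \<Rightarrow> 'c list \<Rightarrow> 'c \<Rightarrow> nat" where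
  "points \<alpha> l c = (\<Sum>z<length l. if l ! z = c then \<alpha> ! z else 0)"

definition advantage :: "nat list \<Rightarrow> 'c list \<Rightarrow> 'c \<Rightarrow> 'c \<Rightarrow> int" where
  "advantage \<alpha> l c d = int (points \<alpha> l c) - int (points \<alpha> l d)"
definition margin ::
  "nat list \<Rightarrow> (nat \<Rightarrow> nat) \<Rightarrow> nat \<Rightarrow> (nat \<Rightarrow> 'c list) \<Rightarrow> 'c \<Rightarrow> 'c \<Rightarrow> int" where
  "margin \<alpha> w n P c d = (\<Sum>j<n. int (w j) * advantage \<alpha> (P j) c d)"

lemma margin_eq_score_diff:
  "margin \<alpha> w n P c d = int (score \<alpha> w n P c) - int (score \<alpha> w n P d)"
  by (simp add: margin_def advantage_def score_def points_def of_nat_sum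
      right_diff_distrib sum_subtractf)

lemma margin_fun_upd:
  assumes "k < n"
  shows "margin \<alpha> w n (P(k := l)) c d
    = margin \<alpha> w n P c d + int (w k) * (advantage \<alpha> l c d - advantage \<alpha> (P k) c d)"
proof -
  have "margin \<alpha> w n (P(k := l)) c d - margin \<alpha> w n P c d
      = (\<Sum>j<n. if j = k then int (w k) * (advantage \<alpha> l c d - advantage \<alpha> (P k) c d) else 0)"
    unfolding margin_def sum_subtractf[symmetric]
    by (intro sum.cong) (auto simp: right_diff_distrib)
  also have "\<dots> = int (w k) * (advantage \<alpha> l c d - advantage \<alpha> (P k) c d)"
    using assms by simp
  finally show ?thesis by simp
qed

lemma valid_bribery_antimono:
  "valid_bribery C n \<tau> pb B VF VB P \<Longrightarrow> VF' \<subseteq> VF \<Longrightarrow> valid_bribery C n \<tau> pb B VF' VB P"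
  unfolding valid_bribery_def by blast

lemma valid_bribery_unbribe:
  assumes "valid_bribery C n \<tau> pb B VF VB P"
  shows "valid_bribery C n \<tau> pb B (insert k VF) (VB - {k}) (P(k := \<tau> k))"
proof -
  have "finite VB" using assms finite_subset unfolding valid_bribery_def by blast
  then have "sum pb (VB - {k}) \<le> sum pb VB" by (simp add: sum_mono2)
  then show ?thesis using assms unfolding valid_bribery_def by auto
qed

lemma valid_bribery_transfer:
  assumes "valid_bribery C n \<tau> pb B VF VB P"
    and "k \<in> VB" and "i < n" and "i \<notin> VF" and "i \<notin> VB" and "pb i \<le> pb k"
  shows "valid_bribery C n \<tau> pb B (insert k VF) (insert i (VB - {k}))
           (P(k := \<tau> k, i := P k))"
proof -
  have "finite VB" using assms(1) finite_subset unfolding valid_bribery_def by blast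
  have "sum pb (insert i (VB - {k})) = pb i + sum pb (VB - {k})"
    using \<open>finite VB\<close> \<open>i \<notin> VB\<close> by simp
  also have "\<dots> \<le> pb k + sum pb (VB - {k})" using \<open>pb i \<le> pb k\<close> by simp
  also have "\<dots> = sum pb VB" using sum.remove[OF \<open>finite VB\<close> \<open>k \<in> VB\<close>, of pb] by simp
  finally show ?thesis using assms unfolding valid_bribery_def by auto
qed

lemma dominatedD:
  assumes "dominated \<tau> w pa pb j' j"
  shows "\<tau> j = \<tau> j'" and "w j' \<le> w j" and "pa j \<le> pa j'" and "pb j \<le> pb j'"
  using assms unfolding dominated_def by auto

lemma valid_bribery_exchange:
  assumes bribery: "valid_bribery C n \<tau> pb B (insert j U) VB P"
    and "j \<notin> U" and "j < n" and "j' < n"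
    and "\<tau> j = \<tau> j'" and "w j' \<le> w j" and "pb j \<le> pb j'"
  obtains VB' P' where "valid_bribery C n \<tau> pb B (insert j' U) VB' P'"
    and "margin \<alpha> w n P c d \<le> margin \<alpha> w n P' c d"
proof (cases "advantage \<alpha> (P j') c d \<le> advantage \<alpha> (\<tau> j') c d")
  case True
  have "valid_bribery C n \<tau> pb B (insert j' U) (VB - {j'}) (P(j' := \<tau> j'))"
    using valid_bribery_unbribe valid_bribery_antimono[OF bribery] by blast
  moreover have "margin \<alpha> w n P c d \<le> margin \<alpha> w n (P(j' := \<tau> j')) c d"
    using True margin_fun_upd[OF \<open>j' < n\<close>, of \<alpha> w P "\<tau> j'" c d] by simp
  ultimately show thesis by (rule that)
next
  case False
  define a where "a = advantage \<alpha> (P j') c d"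
  define t where "t = advantage \<alpha> (\<tau> j') c d"
  have "j \<notin> VB" "\<forall>k. k \<notin> VB \<longrightarrow> P k = \<tau> k"
    using bribery unfolding valid_bribery_def by auto
  \<comment> \<open>An unbribed v_j' keeps its original list, so v_j' must have been bribed.\<close>
  with False have "j' \<in> VB" "j \<noteq> j'" "P j = \<tau> j'"
    using \<open>\<tau> j = \<tau> j'\<close> by auto
  have "valid_bribery C n \<tau> pb B (insert j' U) (insert j (VB - {j'}))
          (P(j' := \<tau> j', j := P j'))"
    using valid_bribery_transfer[OF valid_bribery_antimono[OF bribery]] assms
      \<open>j' \<in> VB\<close> \<open>j \<notin> VB\<close> by blast
  moreover have "margin \<alpha> w n (P(j' := \<tau> j', j := P j')) c d
      = margin \<alpha> w n P c d + (int (w j) - int (w j')) * (a - t)"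
    using margin_fun_upd[OF \<open>j < n\<close>, of \<alpha> w "P(j' := \<tau> j')" "P j'" c d]
      margin_fun_upd[OF \<open>j' < n\<close>, of \<alpha> w P "\<tau> j'" c d] \<open>j \<noteq> j'\<close> \<open>P j = \<tau> j'\<close>
    unfolding a_def t_def by (simp add: algebra_simps)
  moreover have "0 \<le> (int (w j) - int (w j')) * (a - t)"
    using False \<open>w j' \<le> w j\<close> unfolding a_def t_def by simp
  ultimately show thesis using that by fastforce
qed

theorem lemma6:
  fixes C :: "'c set" and \<alpha> :: "nat list" and n :: nat and \<tau> :: "nat \<Rightarrow> 'c list"
    and w pa pb :: "nat \<Rightarrow> nat" and d :: 'c and F B :: nat and VF :: "nat set"
    and j j' :: nat
  assumes "valid_instance C \<alpha> n \<tau> w pa pb d"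
    and "defender_succeeds C \<alpha> n \<tau> w pa pb d F B VF"
    and "j < n" and "j' < n"
    and "dominated \<tau> w pa pb j' j"
    and "j' \<in> VF" and "j \<notin> VF"
  shows "defender_succeeds C \<alpha> n \<tau> w pa pb d F B ((VF - {j'}) \<union> {j})"
proof -
  note dom = dominatedD[OF \<open>dominated \<tau> w pa pb j' j\<close>]
  have VF: "VF \<subseteq> {..<n}" "sum pa VF \<le> F"
    and safe: "\<And>VB P c. valid_bribery C n \<tau> pb B VF VB P \<Longrightarrow> c \<in> C \<Longrightarrow> c \<noteq> d \<Longrightarrow>
      score \<alpha> w n P c \<le> score \<alpha> w n P d"
    using assms(2) unfolding defender_succeeds_def by (auto simp: not_less)
  have "finite VF" using VF(1) finite_subset by blast
  have "sum pa (insert j (VF - {j'})) = pa j + sum pa (VF - {j'})"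
    using \<open>finite VF\<close> \<open>j \<notin> VF\<close> by simp
  also have "\<dots> \<le> sum pa VF"
    using sum.remove[OF \<open>finite VF\<close> \<open>j' \<in> VF\<close>, of pa] dom(3) by simp
  finally have cost: "sum pa (insert j (VF - {j'})) \<le> F" using VF(2) by simp
  have "score \<alpha> w n P c \<le> score \<alpha> w n P d"
    if bribery: "valid_bribery C n \<tau> pb B (insert j (VF - {j'})) VB P"
      and "c \<in> C" "c \<noteq> d" for VB P c
  proof -
    obtain VB' P' where "valid_bribery C n \<tau> pb B VF VB' P'"
      and "margin \<alpha> w n P c d \<le> margin \<alpha> w n P' c d"
      using valid_bribery_exchange[where \<alpha> = \<alpha> and c = c and d = d,
          OF bribery _ \<open>j < n\<close> \<open>j' < n\<close> dom(1,2,4)]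
        \<open>j \<notin> VF\<close> insert_Diff[OF \<open>j' \<in> VF\<close>] by auto
    then show ?thesis
      using safe[of VB' P' c] \<open>c \<in> C\<close> \<open>c \<noteq> d\<close> unfolding margin_eq_score_diff by linarith
  qed
  then show ?thesis
    unfolding defender_succeeds_def using VF(1) \<open>j < n\<close> cost by (auto simp: not_less)
qed

end
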